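(* Let $(V,d)$ be a finite metric space with root $r\in V$ and let $\pi$ be any master tour on $(V,d)$. Let $\{q_v\}_{v\in V}$ and $\{\bar p_v\}_{v\in V}$ be probabilities in $[0,1]$ and let $\beta\le 1$ be a constant such that $\beta\bar p_v\le q_v\le\bar p_v$ for each $v\in V$. Then the expected latency of $\pi$ under probabilities $\{q_v\}_{v\in V}$ is at least $\beta^3$ times the expected latency of $\pi$ under probabilities $\{\bar p_v\}_{v\in V}$.
   Context: A master tour $\pi$ is a tour starting at the root $r$ visiting all vertices of $V$. For an active set $A\subseteq V$, $\pi_A$ visits the vertices of $A$ starting from $r$ in the order of $\pi$ (shortcutting inactive vertices); the latency of $v\in A$ is the length of the path from $r$ to $v$ along $\pi_A$. The expected latency of $\pi$ under probabilities $\{x_v\}$ is $\mathbb{E}_A[\sum_{v\in A}(\text{latency of }v\text{ in }\pi_A)]$ where $A$ contains each $v$ independently with probability $x_v$. *)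

theory Defs
  imports Complex_Main
begin

definition finite_metric :: "'a set \<Rightarrow> ('a \<Rightarrow> 'a \<Rightarrow> real) \<Rightarrow> bool" where
  "finite_metric V d \<longleftrightarrow> finite V \<and>
     (\<forall>x\<in>V. \<forall>y\<in>V. d x y \<ge> 0 \<and> (d x y = 0 \<longleftrightarrow> x = y) \<and> d x y = d y x) \<and>
     (\<forall>x\<in>V. \<forall>y\<in>V. \<forall>z\<in>V. d x z \<le> d x y + d y z)"

definition master_tour :: "'a set \<Rightarrow> 'a \<Rightarrow> 'a list \<Rightarrow> bool" where
  "master_tour V r \<pi> \<longleftrightarrow> \<pi> \<noteq> [] \<and> hd \<pi> = r \<and> distinct \<pi> \<and> set \<pi> = V"

definition path_len :: "('a \<Rightarrow> 'a \<Rightarrow> real) \<Rightarrow> 'a list \<Rightarrow> real" where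
  "path_len d xs = sum_list (map (\<lambda>(a,b). d a b) (zip xs (tl xs)))"

definition restrict_tour :: "'a list \<Rightarrow> 'a set \<Rightarrow> 'a list" where
  "restrict_tour \<pi> A = hd \<pi> # filter (\<lambda>v. v \<in> A) (tl \<pi>)"

definition latency :: "('a \<Rightarrow> 'a \<Rightarrow> real) \<Rightarrow> 'a list \<Rightarrow> 'a \<Rightarrow> real" where
  "latency d xs v = path_len d (takeWhile (\<lambda>u. u \<noteq> v) xs @ [v])"

definition set_prob :: "'a set \<Rightarrow> ('a \<Rightarrow> real) \<Rightarrow> 'a set \<Rightarrow> real" where
  "set_prob V x A = (\<Prod>v\<in>A. x v) * (\<Prod>v\<in>V - A. 1 - x v)"

definition expected_latency ::
  "'a set \<Rightarrow> ('a \<Rightarrow> 'a \<Rightarrow> real) \<Rightarrow> 'a list \<Rightarrow> ('a \<Rightarrow> real) \<Rightarrow> real" where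
  "expected_latency V d \<pi> x =
     (\<Sum>A\<in>Pow V. set_prob V x A * (\<Sum>v\<in>A. latency d (restrict_tour \<pi> A) v))"

end

theory Submission
  imports Defs
begin

text \<open>Along a path r, w1, ..., wk the edge into wi is traversed in the latency of the
  k - i + 1 vertices wi, ..., wk. Conditioning on the first vertex of the tour turns the expected
  latency into a recursion in which the edge between consecutive active vertices x and y is paid
  with weight \<open>p x \<cdot> p y \<cdot> \<Prod>(1 - p z) \<cdot> (1 + \<Sum> p w)\<close>, the product over the skipped
  vertices z and the sum over the vertices w after y. Replacing p by q multiplies \<open>p x\<close>,
  \<open>p y\<close> and \<open>1 + \<Sum> p w\<close> by at least \<open>\<beta>\<close> each and can only increase the factors
  \<open>1 - p z\<close>; the root is always present, so edges leaving it lose only \<open>\<beta>\<^sup>2\<close>.\<close>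

definition expect :: "'a set \<Rightarrow> ('a \<Rightarrow> real) \<Rightarrow> ('a set \<Rightarrow> real) \<Rightarrow> real" where
  "expect S p f = (\<Sum>A\<in>Pow S. set_prob S p A * f A)"

lemma expect_insert:
  assumes "finite S" "a \<notin> S"
  shows "expect (insert a S) p f = p a * expect S p (\<lambda>A. f (insert a A)) + (1 - p a) * expect S p f"
proof -
  have inj: "inj_on (insert a) (Pow S)" using assms(2) by (auto simp: inj_on_def)
  have disj: "Pow S \<inter> insert a ` Pow S = {}" using assms(2) by auto
  have prob_out: "set_prob (insert a S) p A = (1 - p a) * set_prob S p A" if "A \<subseteq> S" for A
  proof -
    have "insert a S - A = insert a (S - A)" using that assms(2) by auto
    then show ?thesis using assms that unfolding set_prob_def by simp
  qed
  have prob_in: "set_prob (insert a S) p (insert a A) = p a * set_prob S p A" if "A \<subseteq> S" for A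
  proof -
    have "insert a S - insert a A = S - A" "a \<notin> A" "finite A"
      using that assms finite_subset by auto
    then show ?thesis unfolding set_prob_def by simp
  qed
  have "expect (insert a S) p f = (\<Sum>A\<in>Pow S. set_prob (insert a S) p A * f A)
       + (\<Sum>A\<in>insert a ` Pow S. set_prob (insert a S) p A * f A)"
    unfolding expect_def Pow_insert using assms disj by (simp add: sum.union_disjoint)
  also have "(\<Sum>A\<in>insert a ` Pow S. set_prob (insert a S) p A * f A)
      = (\<Sum>A\<in>Pow S. set_prob (insert a S) p (insert a A) * f (insert a A))"
    using inj by (simp add: sum.reindex)
  also have "\<dots> = p a * expect S p (\<lambda>A. f (insert a A))"
    unfolding expect_def sum_distrib_left by (rule sum.cong) (auto simp: prob_in)
  also have "(\<Sum>A\<in>Pow S. set_prob (insert a S) p A * f A) = (1 - p a) * expect S p f"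
    unfolding expect_def sum_distrib_left by (rule sum.cong) (auto simp: prob_out)
  finally show ?thesis by simp
qed

lemma expect_const: "finite S \<Longrightarrow> expect S p (\<lambda>_. c) = c"
proof (induction S rule: finite_induct)
  case empty
  then show ?case by (simp add: expect_def set_prob_def)
next
  case (insert a S)
  then show ?case by (simp add: expect_insert algebra_simps)
qed

lemma expect_add: "expect S p (\<lambda>A. f A + g A) = expect S p f + expect S p g"
  unfolding expect_def by (simp add: algebra_simps sum.distrib)

lemma expect_cmult: "expect S p (\<lambda>A. c * f A) = c * expect S p f"
  unfolding expect_def by (simp add: algebra_simps sum_distrib_left)

lemma expect_cong: "(\<And>A. A \<subseteq> S \<Longrightarrow> f A = g A) \<Longrightarrow> expect S p f = expect S p g"
  unfolding expect_def by (rule sum.cong) auto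

lemma expected_latency_eq_expect:
  "expected_latency V d \<pi> p = expect V p (\<lambda>A. \<Sum>v\<in>A. latency d (restrict_tour \<pi> A) v)"
  unfolding expected_latency_def expect_def ..

lemma filter_mem_insert_notin:
  "x \<notin> set xs \<Longrightarrow> filter (\<lambda>v. v = x \<or> v \<in> A) xs = filter (\<lambda>v. v \<in> A) xs"
  by (rule filter_cong) auto

lemma expect_filter_Cons:
  assumes "distinct (x # xs)"
  shows "expect (set (x # xs)) p (\<lambda>A. g (filter (\<lambda>v. v \<in> A) (x # xs)))
    = p x * expect (set xs) p (\<lambda>A. g (x # filter (\<lambda>v. v \<in> A) xs))
      + (1 - p x) * expect (set xs) p (\<lambda>A. g (filter (\<lambda>v. v \<in> A) xs))"
proof -
  have "expect (set (x # xs)) p (\<lambda>A. g (filter (\<lambda>v. v \<in> A) (x # xs)))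
    = p x * expect (set xs) p (\<lambda>A. g (filter (\<lambda>v. v \<in> insert x A) (x # xs)))
      + (1 - p x) * expect (set xs) p (\<lambda>A. g (filter (\<lambda>v. v \<in> A) (x # xs)))"
    using assms by (simp add: expect_insert)
  also have "expect (set xs) p (\<lambda>A. g (filter (\<lambda>v. v \<in> insert x A) (x # xs)))
    = expect (set xs) p (\<lambda>A. g (x # filter (\<lambda>v. v \<in> A) xs))"
    using assms by (intro expect_cong) (simp add: filter_mem_insert_notin)
  also have "expect (set xs) p (\<lambda>A. g (filter (\<lambda>v. v \<in> A) (x # xs)))
    = expect (set xs) p (\<lambda>A. g (filter (\<lambda>v. v \<in> A) xs))"
    using assms by (intro expect_cong) auto
  finally show ?thesis .
qed

lemma expect_count:
  "distinct xs \<Longrightarrow> expect (set xs) p (\<lambda>A. real (length (filter (\<lambda>v. v \<in> A) xs))) = (\<Sum>v\<leftarrow>xs. p v)"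
proof (induction xs)
  case Nil
  then show ?case by (simp add: expect_const)
next
  case (Cons x xs)
  then show ?case
    unfolding expect_filter_Cons[OF Cons.prems, where g = "\<lambda>ys. real (length ys)"]
    by (simp add: expect_add expect_const algebra_simps)
qed

fun total_latency :: "('a \<Rightarrow> 'a \<Rightarrow> real) \<Rightarrow> 'a \<Rightarrow> 'a list \<Rightarrow> real" where
  "total_latency d u [] = 0"
| "total_latency d u (w # ws) = d u w * (1 + real (length ws)) + total_latency d w ws"

lemma path_len_Cons_Cons: "path_len d (a # b # ys) = d a b + path_len d (b # ys)"
  unfolding path_len_def by simp

lemma latency_hd: "latency d (u # ws) u = 0"
  unfolding latency_def by (simp add: path_len_def)

lemma latency_Cons:
  assumes "v \<in> set (w # ws)" "v \<noteq> u"
  shows "latency d (u # w # ws) v = d u w + latency d (w # ws) v"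
  using assms unfolding latency_def by (cases "v = w") (simp_all add: path_len_Cons_Cons)

lemma sum_latency_eq_total_latency:
  "distinct (u # ws) \<Longrightarrow> (\<Sum>v\<in>set ws. latency d (u # ws) v) = total_latency d u ws"
proof (induction ws arbitrary: u)
  case Nil
  then show ?case by simp
next
  case (Cons w ws)
  have "(\<Sum>v\<in>set (w # ws). latency d (u # w # ws) v) = (\<Sum>v\<in>set (w # ws). d u w + latency d (w # ws) v)"
    using Cons.prems by (intro sum.cong) (auto intro: latency_Cons)
  also have "\<dots> = real (card (set (w # ws))) * d u w + (\<Sum>v\<in>set ws. latency d (w # ws) v)"
    using Cons.prems by (simp add: sum.distrib latency_hd)
  also have "card (set (w # ws)) = 1 + length ws"
    using Cons.prems by (simp add: distinct_card)
  finally show ?case using Cons by (simp add: algebra_simps)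
qed

lemma sum_latency_restrict_tour:
  assumes "distinct (r # xs)" "A \<subseteq> set (r # xs)"
  shows "(\<Sum>v\<in>A. latency d (restrict_tour (r # xs) A) v) = total_latency d r (filter (\<lambda>v. v \<in> A) xs)"
proof -
  let ?ys = "filter (\<lambda>v. v \<in> A) xs"
  have dist: "distinct (r # ?ys)" using assms(1) by auto
  have "finite A" using assms(2) finite_subset by blast
  then have "(\<Sum>v\<in>A. latency d (r # ?ys) v) = (\<Sum>v\<in>A - {r}. latency d (r # ?ys) v)"
    by (simp add: sum_diff1 latency_hd)
  also have "A - {r} = set ?ys" using assms by auto
  also have "(\<Sum>v\<in>set ?ys. latency d (r # ?ys) v) = total_latency d r ?ys"
    using dist by (rule sum_latency_eq_total_latency)
  finally show ?thesis
    unfolding restrict_tour_def by simp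
qed

text \<open>With \<open>w\<close> the first active vertex of \<open>xs\<close>, \<open>first_leg_cost p d u xs\<close> is the expectation of
  \<open>d u w\<close> times the number of active vertices from \<open>w\<close> on, and \<open>later_legs_cost p d xs\<close>
  the expected total latency of the active vertices after \<open>w\<close>, measured from \<open>w\<close>.\<close>

fun first_leg_cost :: "('a \<Rightarrow> real) \<Rightarrow> ('a \<Rightarrow> 'a \<Rightarrow> real) \<Rightarrow> 'a \<Rightarrow> 'a list \<Rightarrow> real" where
  "first_leg_cost p d u [] = 0"
| "first_leg_cost p d u (x # xs) =
     p x * d u x * (1 + (\<Sum>v\<leftarrow>xs. p v)) + (1 - p x) * first_leg_cost p d u xs"

fun later_legs_cost :: "('a \<Rightarrow> real) \<Rightarrow> ('a \<Rightarrow> 'a \<Rightarrow> real) \<Rightarrow> 'a list \<Rightarrow> real" where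
  "later_legs_cost p d [] = 0"
| "later_legs_cost p d (x # xs) = p x * first_leg_cost p d x xs + later_legs_cost p d xs"

lemma expect_total_latency:
  "distinct xs \<Longrightarrow> expect (set xs) p (\<lambda>A. total_latency d u (filter (\<lambda>v. v \<in> A) xs))
     = first_leg_cost p d u xs + later_legs_cost p d xs"
proof (induction xs arbitrary: u)
  case Nil
  then show ?case by (simp add: expect_const)
next
  case (Cons x xs)
  then show ?case
    unfolding expect_filter_Cons[OF Cons.prems]
    by (simp add: expect_add expect_cmult expect_const expect_count algebra_simps)
qed

lemma expected_latency_Cons:
  assumes "distinct (r # xs)"
  shows "expected_latency (set (r # xs)) d (r # xs) p = first_leg_cost p d r xs + later_legs_cost p d xs"
proof -
  have "expected_latency (set (r # xs)) d (r # xs) p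
      = expect (set (r # xs)) p (\<lambda>A. total_latency d r (filter (\<lambda>v. v \<in> A) xs))"
    unfolding expected_latency_eq_expect
    using assms by (intro expect_cong) (simp add: sum_latency_restrict_tour)
  also have "\<dots> = expect (set xs) p (\<lambda>A. total_latency d r (filter (\<lambda>v. v \<in> A) xs))"
    using assms by (simp add: expect_insert filter_mem_insert_notin algebra_simps)
  also have "\<dots> = first_leg_cost p d r xs + later_legs_cost p d xs"
    using assms by (simp add: expect_total_latency)
  finally show ?thesis .
qed

lemma first_leg_cost_nonneg:
  "\<lbrakk>\<forall>v\<in>set xs. 0 \<le> p v \<and> p v \<le> 1; \<forall>v\<in>set xs. 0 \<le> d u v\<rbrakk> \<Longrightarrow> 0 \<le> first_leg_cost p d u xs"
  by (induction xs) (auto intro!: add_nonneg_nonneg mult_nonneg_nonneg sum_list_nonneg)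

lemma later_legs_cost_nonneg:
  "\<lbrakk>\<forall>v\<in>set xs. 0 \<le> p v \<and> p v \<le> 1; \<forall>a\<in>set xs. \<forall>b\<in>set xs. 0 \<le> d a b\<rbrakk> \<Longrightarrow> 0 \<le> later_legs_cost p d xs"
  by (induction xs) (auto intro!: add_nonneg_nonneg mult_nonneg_nonneg first_leg_cost_nonneg)

lemma first_leg_cost_scaled_le:
  assumes "0 \<le> \<beta>" "\<beta> \<le> 1"
    and p: "\<forall>v\<in>set xs. 0 \<le> p v \<and> p v \<le> 1"
    and pq: "\<forall>v\<in>set xs. \<beta> * p v \<le> q v \<and> q v \<le> p v"
    and d: "\<forall>v\<in>set xs. 0 \<le> d u v"
  shows "\<beta>\<^sup>2 * first_leg_cost p d u xs \<le> first_leg_cost q d u xs"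
  using p pq d
proof (induction xs)
  case Nil
  then show ?case by simp
next
  case (Cons x xs)
  have "\<beta> * (\<Sum>v\<leftarrow>xs. p v) \<le> (\<Sum>v\<leftarrow>xs. q v)"
    using Cons.prems by (simp add: sum_list_const_mult[symmetric] sum_list_mono)
  then have count: "\<beta> * (1 + (\<Sum>v\<leftarrow>xs. p v)) \<le> 1 + (\<Sum>v\<leftarrow>xs. q v)"
    using \<open>\<beta> \<le> 1\<close> by (simp add: algebra_simps)
  have "0 \<le> \<beta> * (1 + (\<Sum>v\<leftarrow>xs. p v))"
    using Cons.prems \<open>0 \<le> \<beta>\<close> by (auto intro!: mult_nonneg_nonneg add_nonneg_nonneg sum_list_nonneg)
  moreover have "\<beta> * p x \<le> q x" "0 \<le> q x"
    using Cons.prems \<open>0 \<le> \<beta>\<close> by (auto intro: order_trans[OF mult_nonneg_nonneg])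
  ultimately have "(\<beta> * p x) * (\<beta> * (1 + (\<Sum>v\<leftarrow>xs. p v))) \<le> q x * (1 + (\<Sum>v\<leftarrow>xs. q v))"
    using count by (intro mult_mono) auto
  then have "(\<beta> * p x) * (\<beta> * (1 + (\<Sum>v\<leftarrow>xs. p v))) * d u x \<le> q x * (1 + (\<Sum>v\<leftarrow>xs. q v)) * d u x"
    using Cons.prems by (intro mult_right_mono) auto
  then have first: "\<beta>\<^sup>2 * (p x * d u x * (1 + (\<Sum>v\<leftarrow>xs. p v))) \<le> q x * d u x * (1 + (\<Sum>v\<leftarrow>xs. q v))"
    by (simp add: power2_eq_square algebra_simps)
  have "0 \<le> first_leg_cost p d u xs"
    using Cons.prems by (intro first_leg_cost_nonneg) auto
  then have rest: "(1 - p x) * (\<beta>\<^sup>2 * first_leg_cost p d u xs) \<le> (1 - q x) * first_leg_cost q d u xs"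
    using Cons \<open>0 \<le> \<beta>\<close> by (intro mult_mono) auto
  show ?case
    using first rest by (simp add: algebra_simps)
qed

lemma later_legs_cost_scaled_le:
  assumes "0 \<le> \<beta>" "\<beta> \<le> 1"
    and p: "\<forall>v\<in>set xs. 0 \<le> p v \<and> p v \<le> 1"
    and pq: "\<forall>v\<in>set xs. \<beta> * p v \<le> q v \<and> q v \<le> p v"
    and d: "\<forall>a\<in>set xs. \<forall>b\<in>set xs. 0 \<le> d a b"
  shows "\<beta> ^ 3 * later_legs_cost p d xs \<le> later_legs_cost q d xs"
  using p pq d
proof (induction xs)
  case Nil
  then show ?case by simp
next
  case (Cons x xs)
  have "0 \<le> first_leg_cost p d x xs"
    using Cons.prems by (intro first_leg_cost_nonneg) auto
  moreover have "\<beta>\<^sup>2 * first_leg_cost p d x xs \<le> first_leg_cost q d x xs"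
    using Cons.prems assms(1,2) by (intro first_leg_cost_scaled_le) auto
  moreover have "0 \<le> q x"
    using Cons.prems \<open>0 \<le> \<beta>\<close> by (auto intro: order_trans[OF mult_nonneg_nonneg])
  ultimately have "(\<beta> * p x) * (\<beta>\<^sup>2 * first_leg_cost p d x xs) \<le> q x * first_leg_cost q d x xs"
    using Cons.prems by (intro mult_mono) auto
  then have "\<beta> ^ 3 * (p x * first_leg_cost p d x xs) \<le> q x * first_leg_cost q d x xs"
    by (simp add: power2_eq_square power3_eq_cube algebra_simps)
  then show ?case
    using Cons by (simp add: distrib_left)
qed

lemma expected_latency_Cons_nonneg:
  assumes "distinct (r # xs)"
    and "\<forall>v\<in>set xs. 0 \<le> p v \<and> p v \<le> 1"
    and "\<forall>a\<in>set (r # xs). \<forall>b\<in>set (r # xs). 0 \<le> d a b"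
  shows "0 \<le> expected_latency (set (r # xs)) d (r # xs) p"
  unfolding expected_latency_Cons[OF assms(1)]
  using assms(2,3) by (auto intro!: add_nonneg_nonneg first_leg_cost_nonneg later_legs_cost_nonneg)

lemma expected_latency_Cons_scaled_le:
  assumes dist: "distinct (r # xs)" and "\<beta> \<le> 1"
    and p: "\<forall>v\<in>set xs. 0 \<le> p v \<and> p v \<le> 1"
    and q: "\<forall>v\<in>set xs. 0 \<le> q v \<and> q v \<le> 1"
    and pq: "\<forall>v\<in>set xs. \<beta> * p v \<le> q v \<and> q v \<le> p v"
    and d: "\<forall>a\<in>set (r # xs). \<forall>b\<in>set (r # xs). 0 \<le> d a b"
  shows "\<beta> ^ 3 * expected_latency (set (r # xs)) d (r # xs) p \<le> expected_latency (set (r # xs)) d (r # xs) q"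
proof (cases "0 \<le> \<beta>")
  case False
  have "\<beta> ^ 3 * expected_latency (set (r # xs)) d (r # xs) p \<le> 0"
    using False by (intro mult_nonpos_nonneg expected_latency_Cons_nonneg[OF dist p d]) auto
  also have "0 \<le> expected_latency (set (r # xs)) d (r # xs) q"
    by (rule expected_latency_Cons_nonneg[OF dist q d])
  finally show ?thesis .
next
  case True
  have "\<beta> ^ 3 * first_leg_cost p d r xs \<le> \<beta>\<^sup>2 * first_leg_cost p d r xs"
    using True assms by (intro mult_right_mono power_decreasing first_leg_cost_nonneg) auto
  also have "\<dots> \<le> first_leg_cost q d r xs"
    using True assms by (intro first_leg_cost_scaled_le) auto
  finally have "\<beta> ^ 3 * first_leg_cost p d r xs \<le> first_leg_cost q d r xs" .
  moreover have "\<beta> ^ 3 * later_legs_cost p d xs \<le> later_legs_cost q d xs"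
    using True assms by (intro later_legs_cost_scaled_le) auto
  ultimately show ?thesis
    unfolding expected_latency_Cons[OF dist] by (simp add: distrib_left)
qed

theorem lemma3:
  fixes V :: "'a set" and d :: "'a \<Rightarrow> 'a \<Rightarrow> real" and r :: 'a and \<pi> :: "'a list"
    and q pbar :: "'a \<Rightarrow> real" and \<beta> :: real
  assumes "finite_metric V d" and "r \<in> V" and "master_tour V r \<pi>"
    and "\<forall>v\<in>V. 0 \<le> q v \<and> q v \<le> 1" and "\<forall>v\<in>V. 0 \<le> pbar v \<and> pbar v \<le> 1"
    and "\<beta> \<le> 1"
    and "\<forall>v\<in>V. \<beta> * pbar v \<le> q v \<and> q v \<le> pbar v"
  shows "expected_latency V d \<pi> q \<ge> \<beta> ^ 3 * expected_latency V d \<pi> pbar"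
proof -
  obtain xs where \<pi>: "\<pi> = r # xs"
    using assms(3) unfolding master_tour_def by (cases \<pi>) auto
  have dist: "distinct (r # xs)" and V: "V = set (r # xs)"
    using assms(3) unfolding \<pi> master_tour_def by auto
  have d: "\<forall>a\<in>set (r # xs). \<forall>b\<in>set (r # xs). 0 \<le> d a b"
    using assms(1) unfolding V finite_metric_def by blast
  have "\<beta> ^ 3 * expected_latency (set (r # xs)) d (r # xs) pbar \<le> expected_latency (set (r # xs)) d (r # xs) q"
    using assms(4-7) unfolding V by (intro expected_latency_Cons_scaled_le[OF dist _ _ _ _ d]) auto
  then show ?thesis
    unfolding V \<pi> .
qed

end
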